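(* Let $n\ge1$, $m>0$, $\alpha\in\mathbf R$, $\beta,\gamma>0$, $1\le p,q<\infty$, and suppose $c:=\frac{4\gamma}{\beta^2q}\left(\beta-\frac{\alpha}{p}\right)>1$. Then the formula $P_{\beta m}f(x)=\int_{\mathbf C^n}f(y)K_{\beta m}(x,y)\,d\mu_{\beta m}(y)$ defines (the integral converging for every $f\in L^p_{\alpha m}$) a bounded operator from $L^p_{\alpha m}$ into $L^q_{\gamma m}$.
   Context: For $\alpha\in\mathbf R$, $m>0$, $d\mu_{\alpha m}(z)=e^{-\alpha|z|^{2m}}dz$ on $\mathbf C^n$ and $L^p_{\alpha m}=L^p(\mathbf C^n,d\mu_{\alpha m})$. $K_{\beta m}(x,y)=\frac{m\beta^{n/m}}{\pi^n}\sum_{k\ge0}\frac{(\beta^{1/m}\langle x,y\rangle)^k}{k!}\frac{\Gamma(n+k)}{\Gamma(\frac{n+k}{m})}$ is the reproducing kernel of the space of entire functions in $L^2_{\beta m}$. *)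

theory Defs
  imports "HOL-Analysis.Analysis"
begin

text \<open>Points of C^n are modelled as complex^'n for a finite index type 'n,
  so n = CARD('n) >= 1. The measure dz is Lebesgue measure on C^n = R^(2n).\<close>

definition cinner :: "complex^'n \<Rightarrow> complex^'n \<Rightarrow> complex" where
  "cinner x y = (\<Sum>j\<in>UNIV. x $ j * cnj (y $ j))"

text \<open>Weight e^{-alpha |z|^{2m}} of d mu_{alpha m}.\<close>
definition wgt :: "real \<Rightarrow> real \<Rightarrow> complex^'n \<Rightarrow> real" where
  "wgt \<alpha> m z = exp (- \<alpha> * norm z powr (2 * m))"

definition Kern :: "real \<Rightarrow> real \<Rightarrow> complex^'n \<Rightarrow> complex^'n \<Rightarrow> complex" where
  "Kern \<beta> m x y =
     complex_of_real (m * \<beta> powr (real CARD('n) / m) / pi ^ CARD('n)) *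
     (\<Sum>k. (complex_of_real (\<beta> powr (1 / m)) * cinner x y) ^ k / of_nat (fact k) *
           complex_of_real (Gamma (real (CARD('n) + k)) / Gamma (real (CARD('n) + k) / m)))"

definition Lpw :: "real \<Rightarrow> real \<Rightarrow> real \<Rightarrow> (complex^'n \<Rightarrow> complex) set" where
  "Lpw \<alpha> m p = {f. f \<in> borel_measurable lebesgue \<and>
      integrable lebesgue (\<lambda>z. norm (f z) powr p * wgt \<alpha> m z)}"

definition Lpw_norm :: "real \<Rightarrow> real \<Rightarrow> real \<Rightarrow> (complex^'n \<Rightarrow> complex) \<Rightarrow> real" where
  "Lpw_norm \<alpha> m p f = (\<integral>z. norm (f z) powr p * wgt \<alpha> m z \<partial>lebesgue) powr (1 / p)"

definition Pint :: "real \<Rightarrow> real \<Rightarrow> (complex^'n \<Rightarrow> complex) \<Rightarrow> complex^'n \<Rightarrow> complex^'n \<Rightarrow> complex" where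
  "Pint \<beta> m f x y = f y * Kern \<beta> m x y * complex_of_real (wgt \<beta> m y)"

definition Pop :: "real \<Rightarrow> real \<Rightarrow> (complex^'n \<Rightarrow> complex) \<Rightarrow> complex^'n \<Rightarrow> complex" where
  "Pop \<beta> m f x = (\<integral>y. Pint \<beta> m f x y \<partial>lebesgue)"

end

theory Submission
  imports Defs
begin

(* The proof is a direct pointwise estimate.
   1. Kernel growth: termwise bounds on the power series of K_{beta m}, using a lower
      bound for the Gamma function, give |K(x,y)| <= D e^{lambda beta (|x||y|)^m} for
      every lambda > 1.
   2. Splitting the exponent with XY <= X^2/(4b) + b Y^2 and lambda = c^{1/4} yields
      |K(x,y)| e^{-beta|y|^{2m}} e^{alpha|y|^{2m}/p} <= D e^{A|x|^{2m}} e^{-delta|y|^{2m}}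
      with delta > 0 and q A < gamma.
   3. Writing |f| = g e^{alpha|y|^{2m}/p} with g in unweighted L^p, a Hoelder-type
      inequality against the integrable factor e^{-delta|y|^{2m}} gives absolute
      convergence of P f(x) and |P f(x)| <= C ||f|| e^{A|x|^{2m}}.
   4. Since q A < gamma, this growth is q-integrable against e^{-gamma|x|^{2m}}, which
      gives P f in L^q_{gamma m} with ||P f|| <= C' ||f||. *)

lemma power_div_fact_le_exp:
  fixes x :: real assumes "0 \<le> x"
  shows "x ^ k / fact k \<le> exp x"
proof -
  have "(\<Sum>n\<in>{k}. x ^ n / fact n) \<le> (\<Sum>n. x ^ n / fact n)"
    using assms summable_exp_generic[of x]
    by (intro sum_le_suminf) (auto simp: divide_inverse ac_simps)
  thus ?thesis by (simp add: exp_def divide_inverse ac_simps)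
qed

lemma powr_le_const_exp:
  fixes s \<epsilon> :: real assumes "0 \<le> s" "0 < \<epsilon>"
  shows "\<exists>C>0. \<forall>u\<ge>0. u powr s \<le> C * exp (\<epsilon> * u)"
proof -
  define J where "J = nat \<lceil>s\<rceil>"
  have sJ: "s \<le> real J" unfolding J_def by linarith
  define C where "C = 1 + fact J / \<epsilon> ^ J"
  have "C > 0" unfolding C_def using assms by (simp add: add_pos_nonneg)
  moreover have "u powr s \<le> C * exp (\<epsilon> * u)" if u: "u \<ge> 0" for u
  proof -
    have "u powr s \<le> 1 + u ^ J"
    proof (cases "u \<le> 1")
      case True
      hence "u powr s \<le> 1" using u assms by (intro powr_le1) auto
      thus ?thesis using u by (smt (verit) zero_le_power)
    next
      case False
      hence "u powr s \<le> u powr real J" using sJ by (intro powr_mono) auto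
      also have "\<dots> = u ^ J" using False by (simp add: powr_realpow)
      finally show ?thesis by simp
    qed
    also have "u ^ J = fact J / \<epsilon> ^ J * ((\<epsilon> * u) ^ J / fact J)"
      using assms by (simp add: power_mult_distrib field_simps)
    also have "\<dots> \<le> fact J / \<epsilon> ^ J * exp (\<epsilon> * u)"
      using power_div_fact_le_exp[of "\<epsilon> * u" J] u assms by (intro mult_left_mono) auto
    finally have "u powr s \<le> 1 + fact J / \<epsilon> ^ J * exp (\<epsilon> * u)" by simp
    also have "\<dots> \<le> C * exp (\<epsilon> * u)"
      using u assms unfolding C_def by (simp add: distrib_right)
    finally show ?thesis .
  qed
  ultimately show ?thesis by blast
qed

lemma powr_squared: "(x::real) \<ge> 0 \<Longrightarrow> (x powr m)^2 = x powr (2*m)"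
  by (simp add: power2_eq_square powr_add[symmetric])

lemma mult_le_weighted_squares:
  fixes X Y b :: real assumes "b > 0"
  shows "X * Y \<le> X\<^sup>2 / (4 * b) + b * Y\<^sup>2"
proof -
  have "0 \<le> (X - 2 * b * Y)\<^sup>2" by simp
  hence "4 * b * (X * Y) \<le> X\<^sup>2 + 4 * b\<^sup>2 * Y\<^sup>2" by (simp add: power2_eq_square algebra_simps)
  thus ?thesis using assms by (simp add: field_simps power2_eq_square)
qed

(* A Young-type inequality for $0 \le b \le 1$; optimising over $\lambda$ yields a Hoelder-type estimate. *)
lemma young_type_bound:
  fixes a b p lam :: real
  assumes a: "a \<ge> 0" and b: "0 \<le> b" "b \<le> 1" and p: "p \<ge> 1" and lam: "lam > 0"
  shows "a * b \<le> lam powr (p-1) * a powr p + b / lam"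
proof -
  define u where "u = lam * a"
  have uu: "u \<le> u powr p + 1"
  proof (cases "u \<le> 1")
    case True thus ?thesis by (smt (verit) powr_ge_zero)
  next
    case False
    hence "u powr 1 \<le> u powr p" using p by (intro powr_mono) auto
    thus ?thesis using False by simp
  qed
  have "u * b \<le> (u powr p + 1) * b" using uu b by (intro mult_right_mono) auto
  also have "\<dots> = u powr p * b + b" by (simp add: algebra_simps)
  also have "\<dots> \<le> u powr p + b" using b by (smt (verit) mult_left_le powr_ge_zero)
  finally have ub: "u * b \<le> u powr p + b" .
  have up: "u powr p = lam * (lam powr (p-1) * a powr p)"
  proof -
    have "u powr p = lam powr p * a powr p" unfolding u_def using a lam by (simp add: powr_mult)
    also have "lam powr p = lam powr (1 + (p-1))" by simp
    also have "\<dots> = lam * lam powr (p-1)" using lam powr_add[of lam 1 "p-1"] by simp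
    finally show ?thesis by simp
  qed
  have "lam * (a * b) \<le> lam * (lam powr (p-1) * a powr p + b / lam)"
    using ub up lam unfolding u_def by (simp add: algebra_simps)
  thus ?thesis using lam by simp
qed

(* Lower bound for $\Gamma(z)$ obtained by integrating $t^{z-1}e^{-t}$ over $[a, a+1]$. *)
lemma Gamma_lower_bound:
  fixes z a :: real assumes z: "z > 0" and a: "a \<ge> 1"
  shows "a powr (z-1) * exp (-a-1) / 2 \<le> Gamma z"
proof -
  let ?f = "\<lambda>t. t powr (z - 1) / exp t"
  have I: "(?f has_integral Gamma z) {0..}" by (rule Gamma_integral_real[OF z])
  have int1: "?f integrable_on {a..a+1}"
    using a by (intro integrable_continuous_interval continuous_intros) auto
  have pw: "a powr (z-1) * exp (-a-1) / 2 \<le> ?f t" if t: "t \<in> {a..a+1}" for t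
  proof -
    have A: "a powr (z-1) / 2 \<le> t powr (z-1)"
    proof (cases "z \<ge> 1")
      case True
      have "a powr (z-1) \<le> t powr (z-1)" using True t a by (intro powr_mono2) auto
      moreover have "a powr (z-1) \<ge> 0" by simp
      ultimately show ?thesis by linarith
    next
      case False
      have "(2*a) powr (z-1) \<le> t powr (z-1)"
        using False t a by (intro powr_mono2') auto
      moreover have "(2*a) powr (z-1) = 2 powr (z-1) * a powr (z-1)"
        using a by (simp add: powr_mult)
      moreover have "2 powr (-1) \<le> 2 powr (z-1)" using z by (intro powr_mono) auto
      moreover have "2 powr (-1::real) = 1/2" by (simp add: powr_minus)
      moreover have "a powr (z-1) \<ge> 0" by simp
      ultimately have "1/2 * a powr (z-1) \<le> 2 powr (z-1) * a powr (z-1)"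
        by (intro mult_right_mono) auto
      with \<open>(2*a) powr (z-1) \<le> t powr (z-1)\<close> \<open>(2*a) powr (z-1) = 2 powr (z-1) * a powr (z-1)\<close>
      show ?thesis by linarith
    qed
    have B: "exp (-a-1) \<le> 1 / exp t"
    proof -
      have "exp (-a-1) \<le> exp (-t)" using t by simp
      thus ?thesis by (simp add: exp_minus field_simps)
    qed
    have "a powr (z-1) * exp (-a-1) / 2 = (a powr (z-1) / 2) * exp (-a-1)" by simp
    also have "\<dots> \<le> t powr (z-1) * (1 / exp t)"
      using A B by (intro mult_mono) auto
    finally show ?thesis by simp
  qed
  have "a powr (z-1) * exp (-a-1) / 2 = integral {a..a+1} (\<lambda>t. a powr (z-1) * exp (-a-1) / 2)"
    by simp
  also have "\<dots> \<le> integral {a..a+1} ?f"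
    using pw int1 by (intro integral_le) auto
  also have "\<dots> \<le> integral {0..} ?f"
    using a I int1 by (intro integral_subset_le) (auto simp: has_integral_integrable)
  also have "\<dots> = Gamma z" using I by (simp add: integral_unique)
  finally show ?thesis .
qed

lemma norm_cinner_le: "norm (cinner x y) \<le> norm x * norm (y :: complex^'n)"
proof -
  define X :: "real^'n" where "X = (\<chi> j. norm (x $ j))"
  define Y :: "real^'n" where "Y = (\<chi> j. norm (y $ j))"
  have "norm (cinner x y) \<le> (\<Sum>j\<in>UNIV. norm (x $ j * cnj (y $ j)))"
    unfolding cinner_def by (rule norm_sum)
  also have "\<dots> = inner X Y" unfolding X_def Y_def inner_vec_def by (simp add: norm_mult)
  also have "\<dots> \<le> norm X * norm Y" by (rule norm_cauchy_schwarz)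
  also have "norm X = norm x" unfolding X_def norm_vec_def by simp
  also have "norm Y = norm y" unfolding Y_def norm_vec_def by simp
  finally show ?thesis .
qed

definition kcoef :: "nat \<Rightarrow> real \<Rightarrow> real \<Rightarrow> nat \<Rightarrow> complex" where
  "kcoef N \<beta> m k = complex_of_real (\<beta> powr (1/m)) ^ k / of_nat (fact k) *
      complex_of_real (Gamma (real (N + k)) / Gamma (real (N + k) / m))"

lemma norm_kcoef_term:
  assumes "N \<ge> 1" "m > 0" "\<beta> > 0"
  shows "norm (kcoef N \<beta> m k * w ^ k) = (\<beta> powr (1/m) * norm w)^k * (Gamma (real (N+k)) / Gamma (real (N+k) / m)) / fact k"
proof -
  have "Gamma (real (N+k)) > 0" "Gamma (real (N+k) / m) > 0" using assms by auto
  thus ?thesis using assms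
    by (simp add: kcoef_def norm_mult norm_divide norm_power power_mult_distrib abs_of_pos ac_simps)
qed

lemma Kern_power_series:
  "Kern \<beta> m x (y :: complex^'n) = complex_of_real (m * \<beta> powr (real CARD('n) / m) / pi ^ CARD('n)) *
     (\<Sum>k. kcoef CARD('n) \<beta> m k * (cinner x y) ^ k)"
  unfolding Kern_def kcoef_def by (simp add: power_mult_distrib ac_simps)

(* Ratio test: $\sum_k \Gamma(N+k)\rho^k/k!$ converges for $0 \le \rho < 1$. *)
lemma Gamma_ratio_series_summable:
  fixes N :: nat and \<rho> :: real
  assumes N: "N \<ge> 1" and r0: "0 \<le> \<rho>" and r1: "\<rho> < 1"
  shows "summable (\<lambda>k. Gamma (real (N+k)) / fact k * \<rho>^k)"
proof -
  define c where "c = (1 + \<rho>) / 2"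
  define K where "K = nat \<lceil>real N / (c - \<rho>)\<rceil>"
  have cr: "c - \<rho> > 0" using r1 unfolding c_def by simp
  show ?thesis
  proof (rule summable_ratio_test[where c=c and N=K])
    show "c < 1" using r1 unfolding c_def by simp
  next
    fix n assume nK: "n \<ge> K"
    have Gn: "Gamma (real (N+n)) > 0" using N by simp
    have G1: "Gamma (1 + (real N + real n)) = (real N + real n) * Gamma (real N + real n)"
    proof -
      have np: "real N + real n \<notin> \<int>\<^sub>\<le>\<^sub>0" using N by (auto elim!: nonpos_Ints_cases)
      thus ?thesis using Gamma_plus1[of "real (N+n)"] by (simp add: add.commute)
    qed
    have "real N / (c - \<rho>) \<le> real n" using nK unfolding K_def by linarith
    hence "real N \<le> real n * (c - \<rho>)" using cr by (simp add: field_simps)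
    moreover have "\<rho> * real N \<le> real N" using r0 r1 by (intro mult_left_le_one_le) auto
    ultimately have ineq: "real (N+n) * \<rho> \<le> c * real (Suc n)"
      using r0 r1 unfolding c_def by (simp add: field_simps)
    have "norm (Gamma (real (N + Suc n)) / fact (Suc n) * \<rho> ^ Suc n)
        = (real (N+n) * \<rho>) / real (Suc n) * (Gamma (real (N+n)) / fact n * \<rho>^n)"
      using Gn r0 by (simp add: G1 abs_mult field_simps)
    also have "\<dots> \<le> c * (Gamma (real (N+n)) / fact n * \<rho>^n)"
    proof (rule mult_right_mono)
      show "real (N + n) * \<rho> / real (Suc n) \<le> c" using ineq by (simp add: field_simps)
    qed (use Gn r0 in simp)
    also have "\<dots> = c * norm (Gamma (real (N + n)) / fact n * \<rho> ^ n)"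
      using Gn r0 by simp
    finally show "norm (Gamma (real (N + Suc n)) / fact (Suc n) * \<rho> ^ Suc n)
      \<le> c * norm (Gamma (real (N + n)) / fact n * \<rho> ^ n)" .
  qed
qed

lemma inverse_Gamma_le:
  fixes z a :: real assumes z: "z > 0" and a: "a \<ge> 1"
  shows "1 / Gamma z \<le> 2 * exp (a + 1) * a powr (1 - z)"
proof -
  have pos: "0 < a powr (z - 1) * exp (- a - 1) / 2" using a by simp
  have "1 / Gamma z \<le> 1 / (a powr (z - 1) * exp (- a - 1) / 2)"
    using Gamma_lower_bound[OF z a] pos by (intro divide_left_mono) auto
  also have "a powr (z - 1) = 1 / a powr (1 - z)"
    using a by (simp add: powr_minus_divide[symmetric])
  also have "exp (- a - 1) = 1 / exp (a + 1)"
    using exp_minus[of "a + 1"] by (simp add: divide_inverse)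
  finally show ?thesis by (simp add: ac_simps)
qed

lemma power_mult_powr_le:
  fixes t a lam m :: real
  assumes t: "t \<ge> 0" and m: "m > 0" and lam: "lam > 0" and ta: "lam * t powr m \<le> a"
  shows "t ^ k * a powr (- (real k / m)) \<le> (lam powr (-1/m)) ^ k"
proof (cases "t = 0")
  case True
  thus ?thesis by (cases "k = 0") (auto simp: power_0_left)
next
  case False
  hence tp: "t > 0" using t by simp
  hence ap: "a > 0" using lam ta by (smt (verit) mult_pos_pos powr_gt_zero)
  have "t ^ k = (t powr m) powr (real k / m)" using tp m by (simp add: powr_powr powr_realpow)
  hence "t ^ k * a powr (- (real k / m)) = (t powr m) powr (real k / m) / a powr (real k / m)"
    by (simp add: powr_minus divide_inverse)
  also have "\<dots> = (t powr m / a) powr (real k / m)" using tp ap by (simp add: powr_divide)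
  also have "\<dots> \<le> (1 / lam) powr (real k / m)"
    using ta lam ap m by (intro powr_mono2) (auto simp: field_simps)
  also have "\<dots> = (lam powr (-1/m)) ^ k"
    using lam by (simp add: powr_divide powr_minus_divide powr_powr powr_realpow[symmetric])
  finally show ?thesis .
qed

(* Termwise estimate of the kernel series: with $a = \lambda t^m + 1$, the factor $1/\Gamma((N+k)/m)$ is bounded
  by a multiple of $a^{1 - (N+k)/m}$, and $a^{-k/m}$ turns $t^k$ into $\lambda^{-k/m}$. *)
lemma kernel_term_bound:
  fixes N k :: nat and m lam t :: real
  assumes N: "N \<ge> 1" and m: "m > 0" and lam: "lam > 1" and t: "t \<ge> 0"
  defines "a \<equiv> lam * t powr m + 1"
  shows "t^k * (Gamma (real (N+k)) / Gamma (real (N+k) / m)) / fact k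
     \<le> 2 * exp (a+1) * a * (Gamma (real (N+k)) / fact k * (lam powr (-1/m))^k)"
proof -
  define z where "z = real (N+k) / m"
  define c where "c = Gamma (real (N+k)) / fact k"
  have a: "a \<ge> 1" unfolding a_def using lam t by simp
  have c: "c \<ge> 0" unfolding c_def using N by simp
  have "1 - z = (1 - real N / m) + (- (real k / m))"
    unfolding z_def by (simp add: add_divide_distrib)
  hence split: "a powr (1 - z) = a powr (1 - real N / m) * a powr (- (real k / m))"
    by (simp only: powr_add)
  have "a powr (1 - real N / m) \<le> a powr 1" using a N m by (intro powr_mono) auto
  hence first: "a powr (1 - real N / m) \<le> a" using a by simp
  have second: "t ^ k * a powr (- (real k / m)) \<le> (lam powr (-1/m)) ^ k"
    using power_mult_powr_le[OF t m _ _, of lam a k] lam unfolding a_def by simp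
  have "t^k * (Gamma (real (N+k)) / Gamma (real (N+k) / m)) / fact k = c * (t^k * (1 / Gamma z))"
    unfolding c_def z_def by (simp add: field_simps)
  also have "\<dots> \<le> c * (t^k * (2 * exp (a+1) * a powr (1 - z)))"
    using inverse_Gamma_le[of z a] a N m c t unfolding z_def by (intro mult_left_mono) auto
  also have "\<dots> = c * 2 * exp (a+1) * (a powr (1 - real N / m) * (t ^ k * a powr (- (real k / m))))"
    unfolding split by (simp add: ac_simps)
  also have "\<dots> \<le> c * 2 * exp (a+1) * (a * (lam powr (-1/m)) ^ k)"
    using first second a c t by (intro mult_left_mono mult_mono) auto
  finally show ?thesis unfolding c_def by (simp add: ac_simps)
qed

lemma kernel_series_bound:
  fixes w :: complex and N :: nat and m \<beta> lam t :: real
  assumes N: "N \<ge> 1" and m: "m > 0" and \<beta>: "\<beta> > 0" and lam: "lam > 1"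
    and t: "\<beta> powr (1/m) * norm w \<le> t"
  defines "a \<equiv> lam * t powr m + 1"
  defines "T \<equiv> (\<Sum>k. Gamma (real (N+k)) / fact k * (lam powr (-1/m))^k)"
  shows "summable (\<lambda>k. norm (kcoef N \<beta> m k * w ^ k))"
    and "norm (\<Sum>k. kcoef N \<beta> m k * w ^ k) \<le> 2 * exp (a+1) * a * T"
proof -
  define t0 where "t0 = \<beta> powr (1/m) * norm w"
  have t0: "0 \<le> t0" unfolding t0_def using \<beta> by simp
  have tt: "0 \<le> t" using t0 t unfolding t0_def by linarith
  have rho: "0 \<le> lam powr (-1/m)" "lam powr (-1/m) < 1"
    using lam m by (auto intro!: powr_less_one simp del: powr_minus_divide)
  have sc: "summable (\<lambda>k. Gamma (real (N+k)) / fact k * (lam powr (-1/m))^k)"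
    by (rule Gamma_ratio_series_summable[OF N rho])
  have sc2: "summable (\<lambda>k. 2 * exp (a+1) * a * (Gamma (real (N+k)) / fact k * (lam powr (-1/m))^k))"
    by (intro summable_mult sc)
  have bnd: "norm (kcoef N \<beta> m k * w ^ k) \<le> 2 * exp (a+1) * a * (Gamma (real (N+k)) / fact k * (lam powr (-1/m))^k)" for k
  proof -
    have Gp: "Gamma (real (N+k)) / Gamma (real (N+k) / m) / fact k \<ge> 0"
      using N m by auto
    have "norm (kcoef N \<beta> m k * w ^ k) = t0^k * (Gamma (real (N+k)) / Gamma (real (N+k) / m)) / fact k"
      unfolding t0_def by (rule norm_kcoef_term[OF N m \<beta>])
    also have "\<dots> = t0^k * (Gamma (real (N+k)) / Gamma (real (N+k) / m) / fact k)" by simp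
    also have "\<dots> \<le> t^k * (Gamma (real (N+k)) / Gamma (real (N+k) / m) / fact k)"
      using Gp t0 t unfolding t0_def by (intro mult_right_mono power_mono) auto
    also have "\<dots> = t^k * (Gamma (real (N+k)) / Gamma (real (N+k) / m)) / fact k" by simp
    also have "\<dots> \<le> 2 * exp (a+1) * a * (Gamma (real (N+k)) / fact k * (lam powr (-1/m))^k)"
      unfolding a_def by (rule kernel_term_bound[OF N m lam tt])
    finally show ?thesis .
  qed
  show sn: "summable (\<lambda>k. norm (kcoef N \<beta> m k * w ^ k))"
    by (rule summable_comparison_test'[OF sc2]) (use bnd in auto)
  have "norm (\<Sum>k. kcoef N \<beta> m k * w ^ k) \<le> (\<Sum>k. norm (kcoef N \<beta> m k * w ^ k))"
    by (rule summable_norm[OF sn])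
  also have "\<dots> \<le> (\<Sum>k. 2 * exp (a+1) * a * (Gamma (real (N+k)) / fact k * (lam powr (-1/m))^k))"
    by (rule suminf_le[OF bnd sn sc2])
  also have "\<dots> = 2 * exp (a+1) * a * T"
    unfolding T_def using suminf_mult[OF sc, of "2 * exp (a+1) * a"] by simp
  finally show "norm (\<Sum>k. kcoef N \<beta> m k * w ^ k) \<le> 2 * exp (a+1) * a * T" .
qed

(* The kernel series is an entire function of $w$, hence continuous. *)
lemma kernel_series_continuous:
  assumes "m > 0" "\<beta> > 0" "N \<ge> 1"
  shows "continuous_on UNIV (\<lambda>w. \<Sum>k. kcoef N \<beta> m k * w ^ k)"
proof -
  have "isCont (\<lambda>w. \<Sum>k. kcoef N \<beta> m k * w ^ k) w" for w :: complex
  proof (rule isCont_powser)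
    let ?K = "complex_of_real (norm w + 1)"
    show "summable (\<lambda>k. kcoef N \<beta> m k * ?K ^ k)"
      by (rule summable_norm_cancel, rule kernel_series_bound(1)[where lam=2]) (use assms in auto)
    show "norm w < norm ?K" by simp
  qed
  thus ?thesis by (simp add: continuous_on_eq_continuous_at)
qed

lemma Kern_continuous:
  assumes "m > 0" "\<beta> > 0"
  shows "continuous_on UNIV (\<lambda>p. Kern \<beta> m (fst p) (snd p :: complex^'n))"
proof -
  have c1: "continuous_on UNIV (\<lambda>p. cinner (fst p) (snd p :: complex^'n))"
    unfolding cinner_def by (intro continuous_intros)
  have "continuous_on UNIV ((\<lambda>w. \<Sum>k. kcoef CARD('n) \<beta> m k * w ^ k) \<circ> (\<lambda>p. cinner (fst p) (snd p :: complex^'n)))"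
    by (rule continuous_on_compose[OF c1]) (rule continuous_on_subset[OF kernel_series_continuous], use assms in auto)
  thus ?thesis unfolding Kern_power_series o_def by (intro continuous_intros) auto
qed

lemma Kern_bound_exp:
  fixes \<beta> m lam \<delta> :: real
  assumes m: "m > 0" and \<beta>: "\<beta> > 0" and lam: "lam > 1" and \<delta>: "\<delta> > 0"
  shows "\<exists>D. \<forall>x y :: complex^'n. norm (Kern \<beta> m x y) \<le> D * exp ((1+\<delta>) * lam * \<beta> * (norm x * norm y) powr m)"
proof -
  define N where "N = CARD('n)"
  have N: "N \<ge> 1" unfolding N_def by (simp add: Suc_le_eq)
  define M0 where "M0 = m * \<beta> powr (real CARD('n) / m) / pi ^ CARD('n)"
  define T where "T = (\<Sum>k. Gamma (real (N+k)) / fact k * (lam powr (-1/m))^k)"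
  have r1: "lam powr (-1/m) < 1" using lam m by (intro powr_less_one) auto
  have T0: "T \<ge> 0" unfolding T_def
    using Gamma_ratio_series_summable[OF N _ r1] lam m N
    by (intro suminf_nonneg) auto
  define D where "D = \<bar>M0\<bar> * 2 * T * exp (1+\<delta>+1) / \<delta>"
  have "norm (Kern \<beta> m x y) \<le> D * exp ((1+\<delta>) * lam * \<beta> * (norm x * norm y) powr m)" for x y :: "complex^'n"
  proof -
    define t where "t = \<beta> powr (1/m) * (norm x * norm y)"
    define a where "a = lam * t powr m + 1"
    have t0: "t \<ge> 0" unfolding t_def by simp
    have a1: "a \<ge> 1" unfolding a_def using lam t0 by simp
    have tle: "\<beta> powr (1/m) * norm (cinner x y) \<le> t"
      unfolding t_def using norm_cinner_le[of x y] \<beta> by (intro mult_left_mono) auto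
    have sb: "norm (\<Sum>k. kcoef N \<beta> m k * (cinner x y) ^ k) \<le> 2 * exp (a+1) * a * T"
      unfolding a_def T_def by (rule kernel_series_bound(2)[OF N m \<beta> lam tle])
    have tm: "t powr m = \<beta> * (norm x * norm y) powr m"
      unfolding t_def using \<beta> m by (simp add: powr_mult powr_powr)
    have aexp: "a \<le> exp (\<delta> * a) / \<delta>"
    proof -
      have "1 + \<delta> * a \<le> exp (\<delta> * a)" by (rule exp_ge_add_one_self)
      hence "\<delta> * a \<le> exp (\<delta> * a)" by linarith
      thus ?thesis using \<delta> by (simp add: field_simps)
    qed
    have "norm (Kern \<beta> m x y) = \<bar>M0\<bar> * norm (\<Sum>k. kcoef N \<beta> m k * (cinner x y) ^ k)"
      unfolding Kern_power_series M0_def N_def norm_mult norm_of_real by (rule refl)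
    also have "\<dots> \<le> \<bar>M0\<bar> * (2 * exp (a+1) * a * T)"
      using sb by (intro mult_left_mono) auto
    also have "\<dots> \<le> \<bar>M0\<bar> * (2 * exp (a+1) * (exp (\<delta> * a) / \<delta>) * T)"
      using aexp T0 by (intro mult_left_mono mult_right_mono) auto
    also have "\<dots> = \<bar>M0\<bar> * 2 * T / \<delta> * exp ((1+\<delta>) * a + 1)"
      by (simp add: exp_add[symmetric] algebra_simps)
    also have "(1+\<delta>) * a + 1 = (1+\<delta>+1) + (1+\<delta>) * lam * \<beta> * (norm x * norm y) powr m"
      unfolding a_def tm by (simp add: algebra_simps)
    also have "\<bar>M0\<bar> * 2 * T / \<delta> * exp (\<dots>) = D * exp ((1+\<delta>) * lam * \<beta> * (norm x * norm y) powr m)"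
      unfolding D_def by (simp add: exp_add)
    finally show ?thesis .
  qed
  thus ?thesis by blast
qed

lemma Kern_growth:
  fixes \<beta> m lam :: real
  assumes m: "m > 0" and \<beta>: "\<beta> > 0" and lam: "lam > 1"
  shows "\<exists>D\<ge>0. \<forall>x y :: complex^'n.
           norm (Kern \<beta> m x y) \<le> D * exp (lam * \<beta> * (norm x powr m * norm y powr m))"
proof -
  define s where "s = sqrt lam"
  have s: "s > 1" "(1 + (s - 1)) * s = lam" using lam unfolding s_def by (auto simp: real_sqrt_gt_1_iff)
  then obtain D where D: "\<And>x y :: complex^'n. norm (Kern \<beta> m x y) \<le> D * exp (lam * \<beta> * (norm x * norm y) powr m)"
    using Kern_bound_exp[OF m \<beta> s(1), of "s - 1"] by (auto simp: mult.assoc)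
  have "0 \<le> norm (Kern \<beta> m (0::complex^'n) 0)" by simp
  also have "\<dots> \<le> D" using D[of 0 0] m by simp
  finally show ?thesis using D by (auto simp: powr_mult)
qed

(* Choice of exponents: if $c = 4\gamma B/(\beta^2 q) > 1$, the exponent $B$ can be split as $b + \delta$ with
  $\delta > 0$ while $qA < \gamma$ for $A = (\lambda\beta)^2/(4b)$ and some $\lambda > 1$; take $\lambda = c^{1/4}$, $b = B/\lambda$. *)
lemma exponent_choice:
  fixes \<beta> \<gamma> q B :: real
  assumes \<beta>: "\<beta> > 0" and \<gamma>: "\<gamma> > 0" and q: "q > 0" and c: "4 * \<gamma> / (\<beta>\<^sup>2 * q) * B > 1"
  shows "\<exists>L b \<delta>. L > 1 \<and> b > 0 \<and> \<delta> > 0 \<and> b + \<delta> = B \<and> q * ((L * \<beta>)\<^sup>2 / (4 * b)) < \<gamma>"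
proof -
  define c0 where "c0 = 4 * \<gamma> / (\<beta>\<^sup>2 * q) * B"
  have c0: "c0 > 1" using c unfolding c0_def .
  have B: "B > 0"
  proof -
    have "0 < 4 * \<gamma> / (\<beta>\<^sup>2 * q) * B" using c0 unfolding c0_def by linarith
    moreover have "0 < 4 * \<gamma> / (\<beta>\<^sup>2 * q)" using \<beta> \<gamma> q by simp
    ultimately show ?thesis by (rule zero_less_mult_pos)
  qed
  define L where "L = c0 powr (1/4)"
  have L: "L > 1" unfolding L_def using c0 by simp
  have "L ^ 3 = c0 powr (3/4)"
    unfolding L_def using c0 by (simp add: power3_eq_cube powr_add[symmetric])
  also have "\<dots> < c0 powr 1" using c0 by (intro powr_less_mono) auto
  finally have L3: "L ^ 3 < c0" using c0 by simp
  define b where "b = B / L"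
  have b: "b > 0" unfolding b_def using B L by simp
  have \<delta>: "B - b > 0" unfolding b_def using B L by (simp add: divide_less_eq)
  have "q * ((L * \<beta>)\<^sup>2 / (4 * b)) = L ^ 3 * (\<gamma> / c0)"
    unfolding b_def c0_def using B L \<beta> \<gamma> q by (simp add: field_simps power2_eq_square power3_eq_cube)
  also have "\<dots> < c0 * (\<gamma> / c0)" using L3 \<gamma> c0 by (intro mult_strict_right_mono) auto
  also have "\<dots> = \<gamma>" using c0 by simp
  finally show ?thesis using L b \<delta> by (intro exI[of _ L] exI[of _ b] exI[of _ "B - b"]) auto
qed

(* The exponent of
  the kernel bound is split by mult_le_weighted_squares with the parameters from exponent_choice. *)
lemma kernel_weight_estimate:
  fixes \<alpha> \<beta> \<gamma> m p q :: real
  assumes m: "m > 0" and \<beta>: "\<beta> > 0" and \<gamma>: "\<gamma> > 0" and q: "q > 0"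
    and c: "4 * \<gamma> / (\<beta>\<^sup>2 * q) * (\<beta> - \<alpha> / p) > 1"
  shows "\<exists>D A \<delta>. D \<ge> 0 \<and> \<delta> > 0 \<and> q * A < \<gamma> \<and> (\<forall>x y :: complex^'n.
           norm (Kern \<beta> m x y) * wgt \<beta> m y * exp (\<alpha> / p * norm y powr (2*m))
             \<le> D * exp (A * norm x powr (2*m)) * exp (- \<delta> * norm y powr (2*m)))"
proof -
  obtain L b \<delta> where L: "L > 1" and b: "b > 0" and \<delta>: "\<delta> > 0" and split: "b + \<delta> = \<beta> - \<alpha> / p"
    and qA: "q * ((L * \<beta>)\<^sup>2 / (4 * b)) < \<gamma>"
    using exponent_choice[OF \<beta> \<gamma> q c] by blast
  define A where "A = (L * \<beta>)\<^sup>2 / (4 * b)"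
  obtain D where D: "D \<ge> 0"
    and K: "\<And>x y :: complex^'n. norm (Kern \<beta> m x y) \<le> D * exp (L * \<beta> * (norm x powr m * norm y powr m))"
    using Kern_growth[OF m \<beta> L] by blast
  have "norm (Kern \<beta> m x y) * wgt \<beta> m y * exp (\<alpha> / p * norm y powr (2*m))
      \<le> D * exp (A * norm x powr (2*m)) * exp (- \<delta> * norm y powr (2*m))" for x y :: "complex^'n"
  proof -
    let ?X = "L * \<beta> * norm x powr m" and ?Y = "norm y powr m"
    have "?X * ?Y \<le> A * norm x powr (2*m) + b * norm y powr (2*m)"
      using mult_le_weighted_squares[OF b, of ?X ?Y] unfolding A_def by (simp add: power_mult_distrib powr_squared)
    moreover have "\<beta> * norm y powr (2*m) = (b + \<delta> + \<alpha> / p) * norm y powr (2*m)"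
      using split by simp
    ultimately have expo: "L * \<beta> * (norm x powr m * norm y powr m) - \<beta> * norm y powr (2*m) + \<alpha> / p * norm y powr (2*m)
        \<le> A * norm x powr (2*m) - \<delta> * norm y powr (2*m)"
      by (simp add: algebra_simps)
    have "norm (Kern \<beta> m x y) * wgt \<beta> m y * exp (\<alpha> / p * norm y powr (2*m))
        \<le> D * exp (L * \<beta> * (norm x powr m * norm y powr m)) * wgt \<beta> m y * exp (\<alpha> / p * norm y powr (2*m))"
      using K[of x y] by (intro mult_right_mono) (auto simp: wgt_def)
    also have "\<dots> = D * exp (L * \<beta> * (norm x powr m * norm y powr m) - \<beta> * norm y powr (2*m) + \<alpha> / p * norm y powr (2*m))"
      unfolding wgt_def by (simp add: exp_add exp_diff exp_minus field_simps)
    also have "\<dots> \<le> D * exp (A * norm x powr (2*m) - \<delta> * norm y powr (2*m))"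
      using expo D by (intro mult_left_mono) auto
    also have "\<dots> = D * exp (A * norm x powr (2*m)) * exp (- \<delta> * norm y powr (2*m))"
      by (simp add: exp_diff exp_minus field_simps)
    finally show ?thesis .
  qed
  thus ?thesis using D \<delta> qA unfolding A_def by blast
qed

(* The identity is Lebesgue measurable (enables the measurability prover on Lebesgue measure). *)
lemma id_lebesgue_measurable: "(\<lambda>x::'a::euclidean_space. x) \<in> borel_measurable lebesgue"
  by (rule measurable_completion) simp

lemma continuous_lebesgue_measurable: "continuous_on UNIV h \<Longrightarrow> (h :: 'a::euclidean_space \<Rightarrow> 'b::{second_countable_topology, topological_space}) \<in> borel_measurable lebesgue"
  by (rule measurable_completion) (simp add: borel_measurable_continuous_onI)

(* Lebesgue measure is sigma-finite, needed to integrate out one variable measurably. *)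
lemma sigma_finite_lebesgue: "sigma_finite_measure (lebesgue :: 'a::euclidean_space measure)"
proof
  obtain A :: "'a set set" where A: "countable A" "A \<subseteq> sets lborel" "\<Union>A = space lborel"
      "\<forall>a\<in>A. emeasure lborel a \<noteq> \<infinity>"
    using sigma_finite_lborel unfolding sigma_finite_measure_def by blast
  show "\<exists>A::'a set set. countable A \<and> A \<subseteq> sets lebesgue \<and> \<Union>A = space lebesgue \<and> (\<forall>a\<in>A. emeasure lebesgue a \<noteq> \<infinity>)"
    using A by (intro exI[of _ A]) auto
qed

lemma Cauchy_density_integrable: "integrable lborel (\<lambda>t::real. 1 / (1 + t\<^sup>2))"
proof -
  let ?g = "\<lambda>t::real. 1 / (1 + t\<^sup>2)"
  let ?h = "\<lambda>t::real. ?g t * indicator {0..} t"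
  have pos: "1 + t\<^sup>2 > 0" for t :: real by (simp add: add_pos_nonneg)
  have gb: "?g \<in> borel_measurable borel"
    by (intro borel_measurable_continuous_onI continuous_intros) (metis pos less_irrefl)
  have I: "(\<integral>\<^sup>+x. ennreal (?g x) * indicator {0 ..} x \<partial>lborel) = ennreal (pi / 2 - arctan 0)"
  proof (rule nn_integral_FTC_atLeast[where F=arctan])
    show "((\<lambda>a. arctan a) \<longlongrightarrow> pi / 2) at_top" by (rule tendsto_arctan_at_top)
  qed (use gb pos in \<open>auto intro!: derivative_eq_intros simp: field_simps power2_eq_square\<close>)
  have hI: "integrable lborel ?h"
  proof (rule integrableI_nonneg)
    show "?h \<in> borel_measurable lborel" using gb by measurable
    show "AE x in lborel. 0 \<le> ?h x" using pos by (auto intro!: AE_I2 simp: less_imp_le)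
    have "(\<integral>\<^sup>+x. ennreal (?h x) \<partial>lborel) = (\<integral>\<^sup>+x. ennreal (?g x) * indicator {0 ..} x \<partial>lborel)"
      by (intro nn_integral_cong) (simp split: split_indicator)
    also have "\<dots> < \<infinity>" using I by simp
    finally show "(\<integral>\<^sup>+x. ennreal (?h x) \<partial>lborel) < \<infinity>" .
  qed
  have hI2: "integrable lborel (\<lambda>x. ?h (0 + (-1) * x))"
    by (rule lborel_integrable_real_affine[OF hI]) simp
  show ?thesis
  proof (rule Bochner_Integration.integrable_bound[OF Bochner_Integration.integrable_add[OF hI hI2]])
    show "?g \<in> borel_measurable lborel" using gb by simp
    show "AE x in lborel. norm (?g x) \<le> norm (?h x + ?h (0 + (-1) * x))"
      using pos by (intro AE_I2) (auto simp: indicator_def less_imp_le)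
  qed
qed

lemma poly_le_const_exp_powr:
  fixes d m :: real and D :: nat
  assumes d: "d > 0" and m: "m > 0" and D: "D \<ge> 1"
  shows "\<exists>C. \<forall>r\<ge>0. (1 + r\<^sup>2)^D \<le> C * exp (d * r powr (2*m))"
proof -
  obtain C where C: "C > 0" "\<And>u. u \<ge> 0 \<Longrightarrow> u powr (real D / m) \<le> C * exp (d * u)"
    using powr_le_const_exp[of "real D / m" d] d m by auto
  have "(1 + r\<^sup>2)^D \<le> 2^D * (1 + C) * exp (d * r powr (2*m))" if r: "r \<ge> 0" for r
  proof -
    have e1: "1 \<le> exp (d * r powr (2*m))" using d by simp
    have rr: "r ^ (2*D) = (r powr (2*m)) powr (real D / m)"
    proof (cases "r = 0")
      case True thus ?thesis using D by simp
    next
      case False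
      hence "r > 0" using r by simp
      thus ?thesis using m by (simp add: powr_powr powr_realpow[symmetric])
    qed
    have "(1 + r\<^sup>2)^D \<le> 2^D * (1 + r^(2*D))"
    proof (cases "r \<le> 1")
      case True
      hence "1 + r\<^sup>2 \<le> 2" using r by (simp add: power_le_one)
      hence "(1 + r\<^sup>2)^D \<le> 2^D" by (intro power_mono) auto
      thus ?thesis by (simp add: add_nonneg_nonneg ring_distribs) (smt (verit) zero_le_power r mult_nonneg_nonneg)
    next
      case False
      hence "1 + r\<^sup>2 \<le> 2 * r\<^sup>2" by (simp add: power2_eq_square) (smt (verit) mult_less_cancel_left1 r)
      hence "(1 + r\<^sup>2)^D \<le> (2 * r\<^sup>2)^D" by (intro power_mono) auto
      also have "\<dots> = 2^D * r^(2*D)" by (simp add: power_mult_distrib power_mult[symmetric] mult.commute)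
      finally show ?thesis by (smt (verit) zero_le_power mult_left_mono)
    qed
    also have "\<dots> \<le> 2^D * (1 + C * exp (d * r powr (2*m)))"
      using C(2)[of "r powr (2*m)"] rr by (intro mult_left_mono) auto
    also have "\<dots> \<le> 2^D * ((1 + C) * exp (d * r powr (2*m)))"
      using e1 C(1) by (intro mult_left_mono) (auto simp: distrib_right)
    finally show ?thesis by simp
  qed
  thus ?thesis by blast
qed

lemma Cauchy_product_integrable:
  "integrable lebesgue (\<lambda>y::'a::euclidean_space. \<Prod>b\<in>Basis. 1 / (1 + (y \<bullet> b)\<^sup>2))"
proof -
  let ?g = "\<lambda>t::real. 1 / (1 + t\<^sup>2)"
  let ?P = "\<lambda>y::'a. \<Prod>b\<in>Basis. ?g (y \<bullet> b)"
  interpret product_sigma_finite "\<lambda>_. lborel" by standard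
  have pos: "1 + t\<^sup>2 > 0" for t :: real by (simp add: add_pos_nonneg)
  have PI: "integrable (Pi\<^sub>M Basis (\<lambda>_. lborel)) (\<lambda>f. \<Prod>b\<in>Basis. ?g (f b))"
    by (rule product_integrable_prod) (auto intro: Cauchy_density_integrable)
  have Pb: "?P \<in> borel_measurable borel"
    by (intro borel_measurable_continuous_onI continuous_intros) (metis pos less_irrefl)
  have coord: "(\<Sum>b'\<in>Basis. f b' *\<^sub>R b') \<bullet> b = f b" if "b \<in> Basis" for b :: 'a and f
    using that by (simp add: inner_sum_left inner_Basis if_distrib cong: if_cong)
  have "integrable (distr (Pi\<^sub>M Basis (\<lambda>_. lborel)) borel (\<lambda>f. \<Sum>b\<in>Basis. f b *\<^sub>R b)) ?P"
  proof (subst integrable_distr_eq)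
    have "(\<lambda>f. ?P (\<Sum>b\<in>Basis. f b *\<^sub>R b)) = (\<lambda>f. \<Prod>b\<in>Basis. ?g (f b))"
      by (intro ext prod.cong refl) (simp add: coord)
    thus "integrable (Pi\<^sub>M Basis (\<lambda>_. lborel)) (\<lambda>f. ?P (\<Sum>b\<in>Basis. f b *\<^sub>R b))" using PI by simp
  qed (use Pb in measurable)
  hence "integrable lborel ?P" by (simp add: lborel_eq[symmetric])
  thus ?thesis using Pb by (subst integrable_completion) auto
qed

lemma exp_neg_norm_powr_le_Cauchy_product:
  fixes d m :: real
  assumes d: "d > 0" and m: "m > 0"
  shows "\<exists>C. \<forall>y::'a::euclidean_space.
           exp (- d * norm y powr (2*m)) \<le> C * (\<Prod>b\<in>Basis. 1 / (1 + (y \<bullet> b)\<^sup>2))"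
proof -
  obtain C where C: "\<And>r. r \<ge> 0 \<Longrightarrow> (1 + r\<^sup>2)^DIM('a) \<le> C * exp (d * r powr (2*m))"
    using poly_le_const_exp_powr[OF d m, of "DIM('a)"] by (auto simp: Suc_le_eq)
  have "exp (- d * norm y powr (2*m)) \<le> C * (\<Prod>b\<in>Basis. 1 / (1 + (y \<bullet> b)\<^sup>2))" for y :: 'a
  proof -
    have pos: "0 < 1 + t\<^sup>2" for t :: real by (simp add: add_pos_nonneg)
    have "(\<Prod>b\<in>Basis. 1 + (y \<bullet> b)\<^sup>2) \<le> (\<Prod>b\<in>(Basis::'a set). 1 + (norm y)\<^sup>2)"
    proof (intro prod_mono conjI)
      fix b :: 'a assume "b \<in> Basis"
      hence "\<bar>y \<bullet> b\<bar> \<le> norm y" by (rule Basis_le_norm)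
      hence "(y \<bullet> b)\<^sup>2 \<le> (norm y)\<^sup>2" using abs_le_square_iff[of "y \<bullet> b" "norm y"] by simp
      thus "1 + (y \<bullet> b)\<^sup>2 \<le> 1 + (norm y)\<^sup>2" by simp
    qed (use pos in \<open>simp add: less_imp_le\<close>)
    also have "\<dots> \<le> C * exp (d * norm y powr (2*m))" using C[of "norm y"] by simp
    finally have prod_le: "(\<Prod>b\<in>Basis. 1 + (y \<bullet> b)\<^sup>2) \<le> C * exp (d * norm y powr (2*m))" .
    have prod_pos: "0 < (\<Prod>b\<in>(Basis::'a set). 1 + (y \<bullet> b)\<^sup>2)" using pos by (intro prod_pos) auto
    have "exp (- d * norm y powr (2*m)) = 1 / exp (d * norm y powr (2*m))"
      by (simp add: exp_minus divide_inverse)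
    also have "\<dots> \<le> C / (\<Prod>b\<in>Basis. 1 + (y \<bullet> b)\<^sup>2)"
      using prod_le prod_pos by (simp add: field_simps)
    also have "\<dots> = C * (\<Prod>b\<in>Basis. 1 / (1 + (y \<bullet> b)\<^sup>2))" by (simp add: prod_dividef)
    finally show ?thesis .
  qed
  thus ?thesis by blast
qed

lemma exp_neg_norm_powr_integrable:
  fixes d m :: real
  assumes d: "d > 0" and m: "m > 0"
  shows "integrable lebesgue (\<lambda>y::'a::euclidean_space. exp (- d * norm y powr (2*m)))"
proof -
  obtain C where C: "\<And>y::'a. exp (- d * norm y powr (2*m)) \<le> C * (\<Prod>b\<in>Basis. 1 / (1 + (y \<bullet> b)\<^sup>2))"
    using exp_neg_norm_powr_le_Cauchy_product[OF d m] by blast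
  note id_lebesgue_measurable[measurable]
  show ?thesis
    by (rule Bochner_Integration.integrable_bound[OF integrable_mult_right[OF Cauchy_product_integrable, of C]])
       (use C in \<open>auto intro!: AE_I2 order_trans[OF _ abs_ge_self]\<close>)
qed

lemma le_optimised_young:
  fixes I G \<Phi> p :: real
  assumes p: "p \<ge> 1" and G: "G \<ge> 0" and \<Phi>: "\<Phi> \<ge> 0"
    and bound: "\<And>lam. lam > 0 \<Longrightarrow> I \<le> lam powr (p-1) * G + \<Phi> / lam"
  shows "I \<le> (1 + \<Phi>) * G powr (1/p)"
proof (cases "G = 0")
  case True
  show ?thesis
  proof (rule ccontr)
    assume "\<not> ?thesis"
    hence I: "I > 0" using True by simp
    define lam where "lam = (\<Phi> + 1) / I"
    have lam: "lam > 0" unfolding lam_def using I \<Phi> by simp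
    have "I \<le> \<Phi> / lam" using bound[OF lam] True by simp
    also have "\<dots> = \<Phi> * I / (\<Phi> + 1)" unfolding lam_def using I \<Phi> by simp
    also have "\<dots> < I" using I \<Phi> by (simp add: field_simps)
    finally show False by simp
  qed
next
  case False
  hence Gp: "G > 0" using G by simp
  define lam where "lam = G powr (-1/p)"
  have lam: "lam > 0" unfolding lam_def using Gp by simp
  have "lam powr (p-1) * G = G powr (-1/p * (p-1)) * G powr 1"
    unfolding lam_def using Gp by (simp add: powr_powr)
  also have "\<dots> = G powr (-1/p * (p-1) + 1)" by (rule powr_add[symmetric])
  also have "-1/p * (p-1) + 1 = 1/p" using p by (simp add: field_simps)
  finally have first: "lam powr (p-1) * G = G powr (1/p)" .
  have second: "\<Phi> / lam = \<Phi> * G powr (1/p)"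
    unfolding lam_def using Gp by (simp add: powr_minus divide_inverse)
  show ?thesis using bound[OF lam] first second by (simp add: algebra_simps)
qed

(* Hoelder-type estimate $\int g\varphi \le (1 + \int\varphi)\,\|g\|_p$ for $0 \le \varphi \le 1$, obtained by integrating
  young_type_bound and optimising over $\lambda$. *)
lemma integral_mult_le_Lp_root:
  fixes g \<phi> :: "'a \<Rightarrow> real" and p :: real
  assumes p: "p \<ge> 1"
    and gm: "g \<in> borel_measurable M" and \<phi>m: "\<phi> \<in> borel_measurable M"
    and g0: "\<And>x. g x \<ge> 0" and \<phi>0: "\<And>x. 0 \<le> \<phi> x" and \<phi>1: "\<And>x. \<phi> x \<le> 1"
    and gi: "integrable M (\<lambda>x. g x powr p)" and \<phi>i: "integrable M \<phi>"
  shows "integrable M (\<lambda>x. g x * \<phi> x)"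
    and "(\<integral>x. g x * \<phi> x \<partial>M) \<le> (1 + (\<integral>x. \<phi> x \<partial>M)) * (\<integral>x. g x powr p \<partial>M) powr (1/p)"
proof -
  have young: "g x * \<phi> x \<le> lam powr (p-1) * g x powr p + \<phi> x / lam" if "lam > 0" for lam x
    using young_type_bound[OF g0 \<phi>0 \<phi>1 p that] .
  have int_bound: "integrable M (\<lambda>x. lam powr (p-1) * g x powr p + \<phi> x / lam)" for lam
    using gi \<phi>i by auto
  show gi2: "integrable M (\<lambda>x. g x * \<phi> x)"
    by (rule Bochner_Integration.integrable_bound[OF int_bound[of 1]])
       (use gm \<phi>m young[of 1] g0 \<phi>0 in \<open>auto intro!: AE_I2 simp: abs_mult\<close>)
  show "(\<integral>x. g x * \<phi> x \<partial>M) \<le> (1 + (\<integral>x. \<phi> x \<partial>M)) * (\<integral>x. g x powr p \<partial>M) powr (1/p)"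
  proof (rule le_optimised_young[OF p])
    fix lam :: real assume lam: "lam > 0"
    have "(\<integral>x. g x * \<phi> x \<partial>M) \<le> (\<integral>x. lam powr (p-1) * g x powr p + \<phi> x / lam \<partial>M)"
      using young[OF lam] by (intro integral_mono gi2 int_bound)
    also have "\<dots> = lam powr (p-1) * (\<integral>x. g x powr p \<partial>M) + (\<integral>x. \<phi> x \<partial>M) / lam"
      using gi \<phi>i by simp
    finally show "(\<integral>x. g x * \<phi> x \<partial>M) \<le> lam powr (p-1) * (\<integral>x. g x powr p \<partial>M) + (\<integral>x. \<phi> x \<partial>M) / lam" .
  qed (use \<phi>0 in \<open>auto intro!: integral_nonneg_AE\<close>)
qed

lemma Kern_measurable_right:
  assumes "m > 0" "\<beta> > 0"
  shows "(\<lambda>y. Kern \<beta> m x y) \<in> borel_measurable (lebesgue :: (complex^'n) measure)"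
proof (rule continuous_lebesgue_measurable)
  have "continuous_on UNIV ((\<lambda>p. Kern \<beta> m (fst p) (snd p :: complex^'n)) \<circ> (\<lambda>y. (x, y)))"
    by (rule continuous_on_compose[OF _ continuous_on_subset[OF Kern_continuous[OF assms]]])
       (auto intro!: continuous_intros)
  thus "continuous_on UNIV (\<lambda>y. Kern \<beta> m x y)" by (simp add: o_def)
qed

lemma wgt_measurable: "wgt a m \<in> borel_measurable (lebesgue :: (complex^'n) measure)"
proof -
  note id_lebesgue_measurable[measurable]
  show ?thesis unfolding wgt_def by measurable
qed

lemma Lpw_as_plain_Lp:
  fixes f :: "complex^'n \<Rightarrow> complex"
  assumes f: "f \<in> Lpw \<alpha> m p" and p: "p > 0"
  defines "g \<equiv> \<lambda>z. norm (f z) * exp (- \<alpha> / p * norm z powr (2*m))"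
  shows "g \<in> borel_measurable lebesgue" "integrable lebesgue (\<lambda>z. g z powr p)"
    and "Lpw_norm \<alpha> m p f = (\<integral>z. g z powr p \<partial>lebesgue) powr (1/p)"
proof -
  have fm[measurable]: "f \<in> borel_measurable lebesgue" using f unfolding Lpw_def by simp
  note id_lebesgue_measurable[measurable]
  show "g \<in> borel_measurable lebesgue" unfolding g_def by measurable
  have gp: "g z powr p = norm (f z) powr p * wgt \<alpha> m z" for z
    unfolding g_def wgt_def using p by (simp add: powr_mult exp_powr_real)
  show "integrable lebesgue (\<lambda>z. g z powr p)" using f unfolding Lpw_def by (simp add: gp)
  show "Lpw_norm \<alpha> m p f = (\<integral>z. g z powr p \<partial>lebesgue) powr (1/p)"
    unfolding Lpw_norm_def by (simp add: gp)
qed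

lemma Pop_pointwise_bound:
  fixes f :: "complex^'n \<Rightarrow> complex" and A D \<delta> :: real
  assumes m: "m > 0" and \<beta>: "\<beta> > 0" and p: "p \<ge> 1" and f: "f \<in> Lpw \<alpha> m p"
    and D: "D \<ge> 0" and \<delta>: "\<delta> > 0"
    and est: "\<And>x y :: complex^'n. norm (Kern \<beta> m x y) * wgt \<beta> m y * exp (\<alpha> / p * norm y powr (2*m))
                \<le> D * exp (A * norm x powr (2*m)) * exp (- \<delta> * norm y powr (2*m))"
  shows "integrable lebesgue (Pint \<beta> m f x)"
    and "norm (Pop \<beta> m f x) \<le> D * (1 + (\<integral>y. exp (- \<delta> * norm y powr (2*m)) \<partial>(lebesgue :: (complex^'n) measure)))
                              * Lpw_norm \<alpha> m p f * exp (A * norm x powr (2*m))"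
proof -
  define g where "g z = norm (f z) * exp (- \<alpha> / p * norm z powr (2*m))" for z
  define \<phi> :: "complex^'n \<Rightarrow> real" where "\<phi> y = exp (- \<delta> * norm y powr (2*m))" for y
  define M where "M = D * exp (A * norm x powr (2*m))"
  have gm: "g \<in> borel_measurable lebesgue" and gi: "integrable lebesgue (\<lambda>z. g z powr p)"
    and Nf: "Lpw_norm \<alpha> m p f = (\<integral>z. g z powr p \<partial>lebesgue) powr (1/p)"
    using Lpw_as_plain_Lp[OF f] p unfolding g_def by auto
  have \<phi>i: "integrable lebesgue \<phi>" unfolding \<phi>_def by (rule exp_neg_norm_powr_integrable[OF \<delta> m])
  have \<phi>01: "0 \<le> \<phi> y" "\<phi> y \<le> 1" for y unfolding \<phi>_def using \<delta> by auto
  have g0: "0 \<le> g y" for y unfolding g_def by simp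
  note holder = integral_mult_le_Lp_root[OF p gm borel_measurable_integrable[OF \<phi>i] g0 \<phi>01 gi \<phi>i]
  have fm[measurable]: "f \<in> borel_measurable lebesgue" using f unfolding Lpw_def by simp
  note [measurable] = Kern_measurable_right[OF m \<beta>] wgt_measurable
  have Pm: "Pint \<beta> m f x \<in> borel_measurable lebesgue" unfolding Pint_def by measurable
  have Pb: "norm (Pint \<beta> m f x y) \<le> M * (g y * \<phi> y)" for y
  proof -
    have "norm (f y) = g y * exp (\<alpha> / p * norm y powr (2*m))"
      unfolding g_def by (simp add: exp_minus[symmetric] exp_add[symmetric] mult.assoc[symmetric])
    hence "norm (Pint \<beta> m f x y)
          = g y * (norm (Kern \<beta> m x y) * wgt \<beta> m y * exp (\<alpha> / p * norm y powr (2*m)))"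
      unfolding Pint_def by (simp add: norm_mult wgt_def ac_simps)
    also have "\<dots> \<le> g y * (M * \<phi> y)"
    proof (rule mult_left_mono)
      show "norm (Kern \<beta> m x y) * wgt \<beta> m y * exp (\<alpha> / p * norm y powr (2*m)) \<le> M * \<phi> y"
        unfolding M_def \<phi>_def by (rule est)
    qed (simp add: g_def)
    finally show ?thesis by (simp only: mult.left_commute)
  qed
  have Pb_norm: "norm (Pint \<beta> m f x y) \<le> norm (M * (g y * \<phi> y))" for y
    using Pb[of y] D g0[of y] \<phi>01(1)[of y] unfolding M_def by simp
  show Pi: "integrable lebesgue (Pint \<beta> m f x)"
    by (rule Bochner_Integration.integrable_bound[OF integrable_mult_right[OF holder(1), of M] Pm])
       (intro AE_I2 Pb_norm)
  have "norm (Pop \<beta> m f x) \<le> (\<integral>y. M * (g y * \<phi> y) \<partial>lebesgue)"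
    unfolding Pop_def
    by (rule Bochner_Integration.integral_norm_bound_integral[OF Pi]) (use holder(1) Pb in auto)
  also have "\<dots> = M * (\<integral>y. g y * \<phi> y \<partial>lebesgue)" by simp
  also have "\<dots> \<le> M * ((1 + (\<integral>y. \<phi> y \<partial>lebesgue)) * (\<integral>z. g z powr p \<partial>lebesgue) powr (1/p))"
    using holder(2) D unfolding M_def by (intro mult_left_mono) auto
  finally show "norm (Pop \<beta> m f x) \<le> D * (1 + (\<integral>y. exp (- \<delta> * norm y powr (2*m)) \<partial>(lebesgue :: (complex^'n) measure)))
                              * Lpw_norm \<alpha> m p f * exp (A * norm x powr (2*m))"
    unfolding M_def Nf \<phi>_def by (simp add: ac_simps)
qed

(* $P_{\beta m}f$ is measurable, by Fubini-Tonelli measurability of parameter integrals. *)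
lemma Pop_measurable:
  fixes f :: "complex^'n \<Rightarrow> complex"
  assumes m: "m > 0" and \<beta>: "\<beta> > 0" and f: "f \<in> borel_measurable lebesgue"
  shows "Pop \<beta> m f \<in> borel_measurable lebesgue"
proof -
  note id_lebesgue_measurable[measurable]
  have Kjm: "(\<lambda>p. Kern \<beta> m (fst p) (snd p)) \<in> borel_measurable (lebesgue \<Otimes>\<^sub>M (lebesgue :: (complex^'n) measure))"
    by (rule borel_measurable_continuous_Pair[OF _ _ Kern_continuous[OF m \<beta>]]) measurable
  have "(\<lambda>(x, y). Pint \<beta> m f x y) \<in> borel_measurable (lebesgue \<Otimes>\<^sub>M (lebesgue :: (complex^'n) measure))"
    unfolding Pint_def case_prod_beta' using Kjm f wgt_measurable by measurable
  thus ?thesis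
    unfolding Pop_def by (rule sigma_finite_measure.borel_measurable_lebesgue_integral[OF sigma_finite_lebesgue])
qed

lemma Lpw_of_growth:
  fixes h :: "complex^'n \<Rightarrow> complex" and A K :: real
  assumes m: "m > 0" and q: "q > 0" and qA: "q * A < \<gamma>" and K: "K \<ge> 0"
    and hm: "h \<in> borel_measurable lebesgue"
    and growth: "\<And>x. norm (h x) \<le> K * exp (A * norm x powr (2*m))"
  shows "h \<in> Lpw \<gamma> m q"
    and "Lpw_norm \<gamma> m q h
           \<le> K * (\<integral>x. exp (- (\<gamma> - q * A) * norm x powr (2*m)) \<partial>(lebesgue :: (complex^'n) measure)) powr (1/q)"
proof -
  define \<psi> :: "complex^'n \<Rightarrow> real" where "\<psi> x = exp (- (\<gamma> - q * A) * norm x powr (2*m))" for x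
  have \<psi>i: "integrable lebesgue \<psi>" unfolding \<psi>_def by (rule exp_neg_norm_powr_integrable) (use qA m in auto)
  have bound: "norm (h x) powr q * wgt \<gamma> m x \<le> K powr q * \<psi> x" for x
  proof -
    have "norm (h x) powr q \<le> (K * exp (A * norm x powr (2*m))) powr q"
      using growth[of x] q by (intro powr_mono2) auto
    also have "\<dots> = K powr q * exp (q * (A * norm x powr (2*m)))"
      using K by (simp add: powr_mult exp_powr_real)
    finally show ?thesis
      unfolding wgt_def \<psi>_def
      by (auto simp: algebra_simps exp_add[symmetric] intro: order_trans[OF mult_right_mono])
  qed
  have im: "(\<lambda>x. norm (h x) powr q * wgt \<gamma> m x) \<in> borel_measurable lebesgue"
    using hm wgt_measurable by measurable
  have ii: "integrable lebesgue (\<lambda>x. norm (h x) powr q * wgt \<gamma> m x)"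
    by (rule Bochner_Integration.integrable_bound[OF integrable_mult_right[OF \<psi>i, of "K powr q"] im])
       (use bound in \<open>auto simp: wgt_def \<psi>_def\<close>)
  thus "h \<in> Lpw \<gamma> m q" unfolding Lpw_def using hm by simp
  have "(\<integral>x. norm (h x) powr q * wgt \<gamma> m x \<partial>lebesgue) \<le> K powr q * (\<integral>x. \<psi> x \<partial>lebesgue)"
    using integral_mono[OF ii integrable_mult_right[OF \<psi>i] bound] by simp
  hence "Lpw_norm \<gamma> m q h \<le> (K powr q * (\<integral>x. \<psi> x \<partial>lebesgue)) powr (1/q)"
    unfolding Lpw_norm_def using q
    by (intro powr_mono2) (auto intro!: integral_nonneg_AE simp: wgt_def)
  also have "\<dots> = K * (\<integral>x. \<psi> x \<partial>lebesgue) powr (1/q)"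
    using K q by (simp add: powr_mult powr_powr integral_nonneg_AE \<psi>_def)
  finally show "Lpw_norm \<gamma> m q h
           \<le> K * (\<integral>x. exp (- (\<gamma> - q * A) * norm x powr (2*m)) \<partial>(lebesgue :: (complex^'n) measure)) powr (1/q)"
    unfolding \<psi>_def .
qed

theorem proposition9:
  fixes \<alpha> \<beta> \<gamma> m p q :: real
  assumes "m > 0" and "\<beta> > 0" and "\<gamma> > 0" and "1 \<le> p" and "1 \<le> q"
    and "4 * \<gamma> / (\<beta>\<^sup>2 * q) * (\<beta> - \<alpha> / p) > 1"
  shows "(\<forall>f \<in> (Lpw \<alpha> m p :: (complex^'n \<Rightarrow> complex) set).
            \<forall>x. integrable lebesgue (Pint \<beta> m f x))
       \<and> (\<exists>C. \<forall>f \<in> (Lpw \<alpha> m p :: (complex^'n \<Rightarrow> complex) set).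
            Pop \<beta> m f \<in> Lpw \<gamma> m q \<and> Lpw_norm \<gamma> m q (Pop \<beta> m f) \<le> C * Lpw_norm \<alpha> m p f)"
proof -
  note m = assms(1) and \<beta> = assms(2) and p = assms(4)
  obtain D A \<delta> where D: "D \<ge> 0" and \<delta>: "\<delta> > 0" and qA: "q * A < \<gamma>"
    and est: "\<And>x y :: complex^'n. norm (Kern \<beta> m x y) * wgt \<beta> m y * exp (\<alpha> / p * norm y powr (2*m))
                \<le> D * exp (A * norm x powr (2*m)) * exp (- \<delta> * norm y powr (2*m))"
    using kernel_weight_estimate[of m \<beta> \<gamma> q \<alpha> p] assms by auto
  define \<Phi> where "\<Phi> = (\<integral>y. exp (- \<delta> * norm y powr (2*m)) \<partial>(lebesgue :: (complex^'n) measure))"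
  define \<Psi> where "\<Psi> = (\<integral>x. exp (- (\<gamma> - q * A) * norm x powr (2*m)) \<partial>(lebesgue :: (complex^'n) measure))"
  have \<Phi>: "\<Phi> \<ge> 0" unfolding \<Phi>_def by (intro integral_nonneg_AE) auto
  have "integrable lebesgue (Pint \<beta> m f x) \<and> Pop \<beta> m f \<in> Lpw \<gamma> m q
        \<and> Lpw_norm \<gamma> m q (Pop \<beta> m f) \<le> (D * (1 + \<Phi>) * \<Psi> powr (1/q)) * Lpw_norm \<alpha> m p f"
    if f: "f \<in> (Lpw \<alpha> m p :: (complex^'n \<Rightarrow> complex) set)" for f x
  proof -
    note pw = Pop_pointwise_bound[OF m \<beta> p f D \<delta> est]
    have K: "D * (1 + \<Phi>) * Lpw_norm \<alpha> m p f \<ge> 0" using D \<Phi> by (simp add: Lpw_norm_def)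
    have fm: "f \<in> borel_measurable lebesgue" using f unfolding Lpw_def by simp
    note growth = Lpw_of_growth[OF m _ qA K[unfolded \<Phi>_def] Pop_measurable[OF m \<beta> fm] pw(2)]
    show ?thesis using pw(1) growth assms(5) unfolding \<Phi>_def \<Psi>_def by (simp add: ac_simps)
  qed
  thus ?thesis by blast
qed

end
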